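(* Let $G$ be a finite abelian group of order $n$, let $\hat G=\{\psi_1,\dots,\psi_n\}$ be its dual group, and for $\chi\in\hat G^n$ let $a_i$ be the number of coordinates of $\chi$ equal to $\psi_i$ (so $a_1+\cdots+a_n=n$). Let $H=H(\chi)=\frac1n\log\binom{n}{a_1,\dots,a_n}$. If $H\ge(\log n)^{-100}$ then \[ H=\Big(1+O\Big(\frac{\log\log n}{\log n}\Big)\Big)\sum_{i=1}^n\frac{a_i}{n}\log\frac{n}{a_i}, \] where terms with $a_i=0$ are interpreted as $0$ and the implied constant is absolute.
   Context: $\binom{n}{a_1,\dots,a_n}=\frac{n!}{a_1!\cdots a_n!}$ is the multinomial coefficient. *)

theory Defs
  imports Complex_Main
begin

text \<open>The multiplicities a_1,...,a_n are given as a function a on {1..n}.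
  Multinomial coefficient n!/(a_1! ... a_n!) as a real number.\<close>
definition multinomial :: "nat \<Rightarrow> (nat \<Rightarrow> nat) \<Rightarrow> real" where
  "multinomial n a = fact n / (\<Prod>i\<in>{1..n}. fact (a i))"

definition Hent :: "nat \<Rightarrow> (nat \<Rightarrow> nat) \<Rightarrow> real" where
  "Hent n a = ln (multinomial n a) / real n"

definition Sent :: "nat \<Rightarrow> (nat \<Rightarrow> nat) \<Rightarrow> real" where
  "Sent n a = (\<Sum>i\<in>{1..n}. if a i = 0 then 0
                 else real (a i) / real n * ln (real n / real (a i)))"

end

theory Submission
  imports Defs
begin

text \<open>
  Let \<open>d(m) = m ln m - ln m!\<close>. Then \<open>n (Sent - Hent) = d(n) - \<Sum>\<^sub>i d(a\<^sub>i)\<close>, which is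
  nonnegative since \<open>d\<close> is superadditive (a binomial coefficient \<open>(a+b choose a)\<close> is at most
  \<open>(a+b)^(a+b) / (a^a b^b)\<close>). For the upper bound single out a largest part \<open>a\<^sub>j\<close>.
  As \<open>d\<close> grows by at most 1 per step, the gap is at most \<open>\<Sum>\<^sub>i\<^sub>\<noteq>\<^sub>j (a\<^sub>i - d(a\<^sub>i))\<close>,
  and \<open>m - d(m) \<le> 2 sqrt m\<close>. Every other part has \<open>a\<^sub>i \<le> n/2\<close>, and then
  \<open>2 sqrt a\<^sub>i \<le> 4 (ln ln n / ln n) a\<^sub>i ln (n/a\<^sub>i)\<close>: if \<open>a\<^sub>i \<le> sqrt n\<close> because
  \<open>ln (n/a\<^sub>i) \<ge> ln n / 2\<close>, otherwise because \<open>sqrt a\<^sub>i \<ge> n^(1/4) \<ge> ln n\<close> and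
  \<open>ln (n/a\<^sub>i) \<ge> ln 2\<close>. So the estimate holds with \<open>C = 4\<close>, without the hypothesis
  \<open>Hent n a \<ge> (ln n) powr (-100)\<close>.
\<close>

definition fact_defect :: "nat \<Rightarrow> real" where
  "fact_defect m = real m * ln (real m) - ln (fact m)"

lemma fact_defect_0 [simp]: "fact_defect 0 = 0"
  by (simp add: fact_defect_def)

lemma fact_defect_superadditive: "fact_defect a + fact_defect b \<le> fact_defect (a + b)"
proof (cases "a = 0 \<or> b = 0")
  case True
  then show ?thesis by auto
next
  case False
  then have a: "real a > 0" and b: "real b > 0" by auto
  have "real (a + b choose a) * real a ^ a * real b ^ (a + b - a)
        \<le> (\<Sum>k\<le>a+b. real (a + b choose k) * real a ^ k * real b ^ (a + b - k))"
    by (rule member_le_sum) auto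
  also have "\<dots> = (real a + real b) ^ (a + b)"
    by (simp add: binomial_ring)
  finally have "real (a + b choose a) * real a ^ a * real b ^ b \<le> (real a + real b) ^ (a + b)"
    by simp
  then have "ln (real (a + b choose a)) + real a * ln a + real b * ln b
             \<le> real (a + b) * ln (real a + real b)"
    using a b by (simp add: ln_mult ln_realpow flip: ln_le_cancel_iff)
  moreover have "real (a + b choose a) = fact (a + b) / (fact a * fact b)"
    using binomial_fact[of a "a + b", where 'a = real] by simp
  ultimately show ?thesis
    by (simp add: fact_defect_def ln_div ln_mult algebra_simps)
qed

lemma fact_defect_sum_le:
  "finite I \<Longrightarrow> (\<Sum>i\<in>I. fact_defect (a i)) \<le> fact_defect (\<Sum>i\<in>I. a i)"
proof (induction I rule: finite_induct)
  case (insert x F)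
  then show ?case using fact_defect_superadditive[of "a x" "sum a F"] by simp
qed simp

lemma fact_defect_Suc_diff:
  "fact_defect (Suc m) - fact_defect m = real m * (ln (real m + 1) - ln (real m))"
proof (cases "m = 0")
  case False
  have "ln (fact (Suc m) :: real) = ln (real m + 1) + ln (fact m)"
    by (simp add: ln_mult add.commute)
  then show ?thesis by (simp add: fact_defect_def algebra_simps)
qed (simp add: fact_defect_def)

lemma fact_defect_Suc_diff_le: "fact_defect (Suc m) - fact_defect m \<le> 1"
proof (cases "m = 0")
  case False
  then have "ln (real m + 1) - ln (real m) \<le> (real m + 1) / real m - 1"
    using ln_le_minus_one[of "(real m + 1) / real m"] by (simp add: ln_div)
  then have "real m * (ln (real m + 1) - ln (real m)) \<le> real m * ((real m + 1) / real m - 1)"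
    by (rule mult_left_mono) simp
  with False show ?thesis by (simp add: fact_defect_Suc_diff field_simps)
qed (simp add: fact_defect_def)

lemma fact_defect_Suc_diff_ge: "real m / (real m + 1) \<le> fact_defect (Suc m) - fact_defect m"
proof (cases "m = 0")
  case False
  then have "ln (real m) - ln (real m + 1) \<le> real m / (real m + 1) - 1"
    using ln_le_minus_one[of "real m / (real m + 1)"] by (simp add: ln_div)
  then have "real m * (1 / (real m + 1)) \<le> real m * (ln (real m + 1) - ln (real m))"
    by (intro mult_left_mono) (simp_all add: field_simps)
  then show ?thesis by (simp add: fact_defect_Suc_diff)
qed (simp add: fact_defect_def)

lemma fact_defect_diff_le: "m \<le> n \<Longrightarrow> fact_defect n - fact_defect m \<le> real n - real m"
proof (induction n rule: dec_induct)
  case (step k)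
  then show ?case using fact_defect_Suc_diff_le[of k] by simp
qed simp

lemma inverse_Suc_le_sqrt_diff: "1 / (real m + 1) \<le> 2 * (sqrt (real m + 1) - sqrt (real m))"
proof -
  define S where "S = sqrt (real m + 1) + sqrt (real m)"
  have "sqrt (real m) \<le> sqrt (real m + 1)" "sqrt (real m + 1) \<le> real m + 1"
    by (simp_all add: real_le_lsqrt power2_eq_square)
  then have S: "S > 0" "S \<le> 2 * (real m + 1)"
    unfolding S_def by (simp_all add: add_pos_nonneg, linarith)
  have "(sqrt (real m + 1) - sqrt (real m)) * S = 1"
    by (simp add: S_def algebra_simps)
  then have "sqrt (real m + 1) - sqrt (real m) = 1 / S"
    using S by (simp add: field_simps)
  moreover have "1 / (2 * (real m + 1)) \<le> 1 / S"
    using S by (intro frac_le) auto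
  ultimately show ?thesis by (simp add: field_simps)
qed

lemma fact_defect_ge: "real m - fact_defect m \<le> 2 * sqrt (real m)"
proof (induction m)
  case (Suc m)
  have "real m / (real m + 1) = 1 - 1 / (real m + 1)" by (simp add: field_simps)
  then show ?case
    using Suc fact_defect_Suc_diff_ge[of m] inverse_Suc_le_sqrt_diff[of m] by (simp add: add.commute)
qed simp

lemma fact_defect_gap_le:
  assumes "finite I" "i0 \<in> I"
  shows "fact_defect (\<Sum>i\<in>I. a i) - (\<Sum>i\<in>I. fact_defect (a i))
         \<le> (\<Sum>i\<in>I - {i0}. real (a i) - fact_defect (a i))"
proof -
  have sum_a: "(\<Sum>i\<in>I. a i) = a i0 + (\<Sum>i\<in>I - {i0}. a i)"
    using assms by (simp add: sum.remove)
  have "fact_defect (\<Sum>i\<in>I. a i) - fact_defect (a i0) \<le> (\<Sum>i\<in>I - {i0}. real (a i))"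
    using fact_defect_diff_le[of "a i0" "\<Sum>i\<in>I. a i"] by (simp add: sum_a)
  then show ?thesis
    using assms by (simp add: sum.remove sum_subtractf)
qed

lemma entropy_gap_eq:
  assumes "(\<Sum>i\<in>{1..n}. a i) = n"
  shows "real n * (Sent n a - Hent n a) = fact_defect n - (\<Sum>i\<in>{1..n}. fact_defect (a i))"
proof (cases "n = 0")
  case False
  have "real n * Sent n a = (\<Sum>i\<in>{1..n}. real (a i) * ln (real n) - real (a i) * ln (real (a i)))"
    using False unfolding Sent_def sum_distrib_left
    by (intro sum.cong) (auto simp: ln_div right_diff_distrib)
  also have "\<dots> = real n * ln (real n) - (\<Sum>i\<in>{1..n}. real (a i) * ln (real (a i)))"
    using assms by (simp add: sum_subtractf flip: sum_distrib_right of_nat_sum)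
  finally have Sent: "real n * Sent n a = \<dots>" .
  have "(\<Prod>i\<in>{1..n}. fact (a i) :: real) > 0"
    by (intro prod_pos) auto
  then have Hent: "real n * Hent n a = ln (fact n) - (\<Sum>i\<in>{1..n}. ln (fact (a i)))"
    using False by (simp add: Hent_def multinomial_def ln_div ln_prod)
  show ?thesis
    unfolding right_diff_distrib Sent Hent by (simp add: fact_defect_def sum_subtractf)
qed (simp add: Sent_def Hent_def)

lemma ln_ln_ge_1:
  fixes x :: real
  assumes "27 \<le> x"
  shows "1 \<le> ln (ln x)"
proof -
  have "exp (exp 1) \<le> exp (3 :: real)"
    using exp_le by simp
  also have "exp (3 :: real) = exp 1 ^ 3"
    by (simp flip: exp_of_nat_mult)
  also have "\<dots> \<le> 3 ^ 3"
    using exp_le by (intro power_mono) auto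
  finally have "exp (exp 1) \<le> x"
    using assms by simp
  then have "exp 1 \<le> ln x"
    using assms by (simp add: ln_ge_iff)
  then show ?thesis
    by (simp add: ln_ge_iff less_le_trans[OF exp_gt_zero])
qed
lemma ln_le_sqrt_sqrt:
  fixes x :: real
  assumes "2 ^ 24 \<le> x"
  shows "ln x \<le> sqrt (sqrt x)"
proof -
  define y where "y = sqrt (sqrt x)"
  have "y ^ 4 = (y ^ 2) ^ 2"
    by (simp flip: power_mult)
  also have "\<dots> = x"
    using assms by (simp add: y_def)
  finally have y4: "y ^ 4 = x" .
  have y: "64 \<le> y"
    unfolding y_def using assms by (intro real_le_rsqrt) simp_all
  then have "8 \<le> sqrt y"
    by (simp add: real_le_rsqrt)
  then have sqrt_y: "8 * sqrt y \<le> y"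
    using y mult_right_mono[of 8 "sqrt y" "sqrt y"] by simp
  have "ln x = 8 * ln (sqrt y)"
    using y by (simp add: ln_sqrt ln_realpow flip: y4)
  also have "\<dots> \<le> 8 * (sqrt y - 1)"
    using y ln_le_minus_one[of "sqrt y"] by simp
  also have "\<dots> \<le> y"
    using sqrt_y by simp
  finally show ?thesis
    by (simp add: y_def)
qed
lemma sqrt_le_entropy_term:
  assumes n: "2 ^ 24 \<le> real n" and a: "1 \<le> a" "2 * a \<le> n"
  shows "2 * sqrt (real a)
         \<le> 4 * (ln (ln (real n)) / ln (real n)) * (real a * ln (real n / real a))"
proof -
  define L where "L = ln (real n)"
  define l where "l = ln (ln (real n))"
  have l: "1 \<le> l"
    unfolding l_def using n by (intro ln_ln_ge_1) simp
  have L: "0 < L" and a_pos: "0 < real a"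
    using n a by (simp_all add: L_def)
  have ln_ratio: "ln (real n / real a) = L - ln (real a)"
    using n a_pos by (simp add: L_def ln_div)
  consider "real a ^ 2 \<le> real n" | "real n < real a ^ 2"
    by linarith
  then show ?thesis
  proof cases
    case 1
    then have "ln (real a ^ 2) \<le> L"
      using a_pos n unfolding L_def by (subst ln_le_cancel_iff) auto
    then have "2 * ln (real a) \<le> L"
      using a_pos by (simp add: ln_realpow)
    then have ratio: "L / 2 \<le> ln (real n / real a)"
      using ln_ratio by simp
    have "sqrt (real a) \<le> real a"
      using a by (intro real_le_lsqrt) (simp_all add: power2_eq_square)
    moreover have "real a \<le> l * real a"
      using mult_right_mono[OF l, of "real a"] by simp
    ultimately have "2 * sqrt (real a) \<le> 2 * l * real a"
      by simp
    also have "\<dots> = 4 * (l / L) * (real a * (L / 2))"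
      using L by (simp add: field_simps)
    also have "\<dots> \<le> 4 * (l / L) * (real a * ln (real n / real a))"
      using ratio l L a_pos by (intro mult_left_mono) auto
    finally show ?thesis
      unfolding l_def L_def .
  next
    case 2
    then have "sqrt (sqrt (real n)) \<le> sqrt (real a)"
      using a_pos real_sqrt_less_mono[OF 2] by simp
    then have La: "L \<le> sqrt (real a)"
      using ln_le_sqrt_sqrt[OF n] unfolding L_def by linarith
    have "ln (1 / 2 :: real) \<le> 1 / 2 - 1"
      by (intro ln_le_minus_one) simp
    moreover have "ln 2 \<le> ln (real n / real a)"
      using a a_pos by (simp add: field_simps flip: of_nat_mult)
    ultimately have ratio: "1 / 2 \<le> ln (real n / real a)"
      by (simp add: ln_div)
    have "sqrt (real a) * L \<le> sqrt (real a) * sqrt (real a)"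
      using La by (intro mult_left_mono) auto
    then have "sqrt (real a) * L \<le> real a"
      by simp
    then have "2 * sqrt (real a) \<le> 4 * (1 / L) * (real a * (1 / 2))"
      using L by (simp add: field_simps)
    also have "\<dots> \<le> 4 * (l / L) * (real a * ln (real n / real a))"
      using ratio l L a_pos by (intro mult_mono mult_left_mono divide_right_mono) auto
    finally show ?thesis
      unfolding l_def L_def .
  qed
qed

lemma entropy_gap_bound:
  assumes n: "2 ^ 24 \<le> real n" and a: "(\<Sum>i\<in>{1..n}. a i) = n"
  shows "\<bar>Hent n a - Sent n a\<bar> \<le> 4 * (ln (ln (real n)) / ln (real n)) * Sent n a"
proof -
  define I where "I = {1..n}"
  define c where "c = 4 * (ln (ln (real n)) / ln (real n))"
  define t where "t i = (if a i = 0 then 0 else real (a i) * ln (real n / real (a i)))" for i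
  have n_pos: "0 < n" and I: "finite I" "I \<noteq> {}"
    using n by (simp_all add: I_def)
  have "1 \<le> ln (ln (real n))"
    using n by (intro ln_ln_ge_1) simp
  moreover have "0 \<le> ln (real n)"
    using n by simp
  ultimately have c: "0 \<le> c"
    by (simp add: c_def)
  have a_le: "a i \<le> n" if "i \<in> I" for i
    using member_le_sum[of i I a] that I a by (simp add: I_def)
  have t: "0 \<le> t i" if "i \<in> I" for i
    using a_le[OF that] by (simp add: t_def)
  have Sent: "real n * Sent n a = (\<Sum>i\<in>I. t i)"
    unfolding Sent_def I_def t_def sum_distrib_left using n_pos by (intro sum.cong) auto
  have "Max (a ` I) \<in> a ` I"
    using I by (intro Max_in) auto
  then obtain i0 where i0: "i0 \<in> I" "a i0 = Max (a ` I)"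
    by auto
  have half: "2 * a i \<le> n" if "i \<in> I - {i0}" for i
  proof -
    have "a i \<le> a i0"
      using that I by (simp add: i0(2))
    have "a i + a i0 = sum a {i, i0}"
      using that by simp
    also have "\<dots> \<le> sum a I"
      using that i0(1) I by (intro sum_mono2) auto
    also have "\<dots> = n"
      using a by (simp add: I_def)
    finally show ?thesis
      using \<open>a i \<le> a i0\<close> by linarith
  qed
  have "real n * (Sent n a - Hent n a) \<le> (\<Sum>i\<in>I - {i0}. real (a i) - fact_defect (a i))"
    using entropy_gap_eq[OF a] fact_defect_gap_le[OF I(1) i0(1), of a] a by (simp add: I_def)
  also have "\<dots> \<le> (\<Sum>i\<in>I - {i0}. c * t i)"
  proof (rule sum_mono)
    fix i assume i: "i \<in> I - {i0}"
    show "real (a i) - fact_defect (a i) \<le> c * t i"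
    proof (cases "a i = 0")
      case False
      then show ?thesis
        using fact_defect_ge[of "a i"] sqrt_le_entropy_term[OF n _ half[OF i]]
        by (simp add: c_def t_def)
    qed (simp add: t_def)
  qed
  also have "\<dots> \<le> (\<Sum>i\<in>I. c * t i)"
    using I t c by (intro sum_mono2) auto
  also have "\<dots> = c * (real n * Sent n a)"
    by (simp add: Sent sum_distrib_left)
  finally have upper: "Sent n a - Hent n a \<le> c * Sent n a"
    using n_pos by (simp add: mult.left_commute)
  have "0 \<le> real n * (Sent n a - Hent n a)"
    using entropy_gap_eq[OF a] fact_defect_sum_le[of "{1..n}" a] a by simp
  then have "0 \<le> Sent n a - Hent n a"
    using n_pos by (simp add: zero_le_mult_iff)
  with upper show ?thesis
    by (simp add: c_def)
qed

theorem lemma5p1: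
  shows "\<exists>C N0. \<forall>n::nat \<ge> N0. \<forall>a::nat \<Rightarrow> nat.
           (\<Sum>i\<in>{1..n}. a i) = n \<longrightarrow>
           Hent n a \<ge> ln (real n) powr (-100) \<longrightarrow>
           \<bar>Hent n a - Sent n a\<bar> \<le> C * (ln (ln (real n)) / ln (real n)) * Sent n a"
proof (intro exI[of _ "4 :: real"] exI[of _ "2 ^ 24 :: nat"] allI impI)
  fix n :: nat and a :: "nat \<Rightarrow> nat"
  assume "2 ^ 24 \<le> n" and a: "(\<Sum>i\<in>{1..n}. a i) = n"
    and "ln (real n) powr (-100) \<le> Hent n a"
  from \<open>2 ^ 24 \<le> n\<close> have "2 ^ 24 \<le> real n"
    by (metis of_nat_le_iff of_nat_numeral of_nat_power)
  then show "\<bar>Hent n a - Sent n a\<bar> \<le> 4 * (ln (ln (real n)) / ln (real n)) * Sent n a"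
    using a by (rule entropy_gap_bound)
qed

end
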